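(* For every preordered group $(G,P_G)$, the lattice of normal subobjects of $(G,P_G)$ in $\mathsf{PreOrdGrp}$ is modular: for normal subobjects $(A,P_A)$, $(B,P_B)$, $(C,P_C)$ of $(G,P_G)$ with $(C,P_C)\le(A,P_A)$, one has $(A,P_A)\wedge((B,P_B)\vee(C,P_C))=((A,P_A)\wedge(B,P_B))\vee(C,P_C)$.
   Context: A preordered group is a pair $(G,P_G)$ where $G$ is a group (additively written, not necessarily abelian) and $P_G\subseteq G$ is a submonoid closed under conjugation; morphisms $(G,P_G)\to(H,P_H)$ are group homomorphisms $f$ with $f(P_G)\subseteq P_H$. This is the category $\mathsf{PreOrdGrp}$. A normal subobject of $(G,P_G)$ is a subobject which is the kernel of some morphism; up to isomorphism these are exactly the pairs $(A,A\cap P_G)$ with $A$ a normal subgroup of $G$. Normal subobjects are ordered by inclusion; meet and join are taken in the poset of normal subobjects of $(G,P_G)$. *)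

theory Defs
  imports "HOL-Algebra.Algebra"
begin

text \<open>HOL-Algebra groups
  are written multiplicatively; the additive notation of the paper is purely
  notational (G need not be abelian).\<close>

definition preordered_group :: "('a, 'b) monoid_scheme \<Rightarrow> 'a set \<Rightarrow> bool" where
  "preordered_group G P \<longleftrightarrow>
     group G \<and> submonoid P G \<and>
     (\<forall>g \<in> carrier G. \<forall>p \<in> P. g \<otimes>\<^bsub>G\<^esub> p \<otimes>\<^bsub>G\<^esub> inv\<^bsub>G\<^esub> g \<in> P)"

text \<open>Normal subobjects of (G,P) (up to isomorphism): the pairs (A, A \<inter> P)
  with A a normal subgroup of G.\<close>

definition normal_subobjects :: "('a, 'b) monoid_scheme \<Rightarrow> 'a set \<Rightarrow> ('a set \<times> 'a set) set" where
  "normal_subobjects G P = {(A, A \<inter> P) | A. A \<lhd> G}"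

definition normal_subobject_poset ::
    "('a, 'b) monoid_scheme \<Rightarrow> 'a set \<Rightarrow> ('a set \<times> 'a set) gorder" where
  "normal_subobject_poset G P =
     \<lparr> carrier = normal_subobjects G P,
       eq = (=),
       le = (\<lambda>u v. fst u \<subseteq> fst v \<and> snd u \<subseteq> snd v) \<rparr>"

end

theory Submission
  imports Defs
begin

text \<open>The positive cone of a normal subobject (A, A \<inter> P) is determined by A, so
  A \<mapsto> (A, A \<inter> P) is an order isomorphism from the normal subgroups of G onto
  the normal subobjects of (G, P).  Meets and joins are therefore computed as
  A \<inter> B and A <#> B, and modularity is Dedekind's modular law for subgroups.\<close>

lemma normal_subobject_poset_carrier:
  "carrier (normal_subobject_poset G P) = {(A, A \<inter> P) | A. A \<lhd> G}"
  by (simp add: normal_subobject_poset_def normal_subobjects_def)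

lemma normal_subobject_poset_le_iff:
  "(A, A \<inter> P) \<sqsubseteq>\<^bsub>normal_subobject_poset G P\<^esub> (B, B \<inter> P) \<longleftrightarrow> A \<subseteq> B"
  by (auto simp: normal_subobject_poset_def)

lemma partial_order_normal_subobject_poset:
  "partial_order (normal_subobject_poset G P)"
  by unfold_locales (auto simp: normal_subobject_poset_def)

context group
begin

lemma set_mult_subset_iff:
  assumes "subgroup A G" "subgroup B G" "subgroup C G"
  shows "A <#> B \<subseteq> C \<longleftrightarrow> A \<subseteq> C \<and> B \<subseteq> C"
proof
  assume AB: "A <#> B \<subseteq> C"
  have "a \<in> C" if "a \<in> A" for a
  proof -
    have "a \<otimes> \<one> \<in> A <#> B"
      using that subgroup.one_closed[OF assms(2)] unfolding set_mult_def by blast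
    then show ?thesis using AB that subgroup.mem_carrier[OF assms(1)] by auto
  qed
  moreover have "b \<in> C" if "b \<in> B" for b
  proof -
    have "\<one> \<otimes> b \<in> A <#> B"
      using that subgroup.one_closed[OF assms(1)] unfolding set_mult_def by blast
    then show ?thesis using AB that subgroup.mem_carrier[OF assms(2)] by auto
  qed
  ultimately show "A \<subseteq> C \<and> B \<subseteq> C" by blast
next
  assume "A \<subseteq> C \<and> B \<subseteq> C"
  then show "A <#> B \<subseteq> C"
    unfolding set_mult_def using subgroup.m_closed[OF assms(3)] by blast
qed

lemma set_mult_modular_law:
  assumes A: "subgroup A G" and "B \<subseteq> carrier G" and "C \<subseteq> A"
  shows "A \<inter> (B <#> C) = (A \<inter> B) <#> C"
proof
  show "A \<inter> (B <#> C) \<subseteq> (A \<inter> B) <#> C"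
  proof
    fix x assume x: "x \<in> A \<inter> (B <#> C)"
    then obtain b c where bc: "b \<in> B" "c \<in> C" "x = b \<otimes> c"
      unfolding set_mult_def by blast
    have carr: "b \<in> carrier G" "c \<in> carrier G"
      using bc assms subgroup.mem_carrier[OF A] by auto
    have "b = x \<otimes> inv c" using bc carr by (simp add: m_assoc)
    also have "\<dots> \<in> A"
      using x bc \<open>C \<subseteq> A\<close> by (blast intro: subgroup.m_closed[OF A] subgroup.m_inv_closed[OF A])
    finally show "x \<in> (A \<inter> B) <#> C"
      using bc unfolding set_mult_def by blast
  qed
  show "(A \<inter> B) <#> C \<subseteq> A \<inter> (B <#> C)"
    unfolding set_mult_def using \<open>C \<subseteq> A\<close> subgroup.m_closed[OF A] by blast
qed

lemma normal_subobject_join_least: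
  assumes "A \<lhd> G" "B \<lhd> G"
  shows "least (normal_subobject_poset G P) (A <#> B, (A <#> B) \<inter> P)
           (Upper (normal_subobject_poset G P) {(A, A \<inter> P), (B, B \<inter> P)})"
proof -
  have sub: "subgroup A G" "subgroup B G" using assms normal_imp_subgroup by auto
  have AB: "A <#> B \<lhd> G" using assms normal_subgroup_set_mult_closed by blast
  show ?thesis
  proof (rule least_UpperI)
    fix N assume "N \<in> {(A, A \<inter> P), (B, B \<inter> P)}"
    then show "N \<sqsubseteq>\<^bsub>normal_subobject_poset G P\<^esub> (A <#> B, (A <#> B) \<inter> P)"
      using set_mult_subset_iff[OF sub normal_imp_subgroup[OF AB]]
      by (auto simp: normal_subobject_poset_le_iff)
  next
    fix N assume N: "N \<in> Upper (normal_subobject_poset G P) {(A, A \<inter> P), (B, B \<inter> P)}"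
    then obtain C where C: "N = (C, C \<inter> P)" "C \<lhd> G"
      by (auto simp: Upper_def normal_subobject_poset_carrier)
    with N assms have "A \<subseteq> C" "B \<subseteq> C"
      by (auto simp: Upper_def normal_subobject_poset_carrier normal_subobject_poset_le_iff)
    then show "(A <#> B, (A <#> B) \<inter> P) \<sqsubseteq>\<^bsub>normal_subobject_poset G P\<^esub> N"
      using set_mult_subset_iff[OF sub normal_imp_subgroup[OF C(2)]] C(1)
      by (simp add: normal_subobject_poset_le_iff)
  qed (use assms AB in \<open>auto simp: normal_subobject_poset_carrier\<close>)
qed

lemma normal_subobject_meet_greatest:
  assumes "A \<lhd> G" "B \<lhd> G"
  shows "greatest (normal_subobject_poset G P) (A \<inter> B, A \<inter> B \<inter> P)
           (Lower (normal_subobject_poset G P) {(A, A \<inter> P), (B, B \<inter> P)})"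
proof (rule greatest_LowerI)
  fix N assume "N \<in> {(A, A \<inter> P), (B, B \<inter> P)}"
  then show "(A \<inter> B, A \<inter> B \<inter> P) \<sqsubseteq>\<^bsub>normal_subobject_poset G P\<^esub> N"
    using normal_subobject_poset_le_iff[where A = "A \<inter> B" and P = P] by auto
next
  fix N assume N: "N \<in> Lower (normal_subobject_poset G P) {(A, A \<inter> P), (B, B \<inter> P)}"
  then obtain C where C: "N = (C, C \<inter> P)"
    by (auto simp: Lower_def normal_subobject_poset_carrier)
  with N assms have "C \<subseteq> A \<inter> B"
    by (auto simp: Lower_def normal_subobject_poset_carrier normal_subobject_poset_le_iff)
  then show "N \<sqsubseteq>\<^bsub>normal_subobject_poset G P\<^esub> (A \<inter> B, A \<inter> B \<inter> P)"
    using C normal_subobject_poset_le_iff[where A = C and P = P and B = "A \<inter> B"] by (simp add: Int_assoc)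
qed (use assms normal_subgroup_intersect in \<open>auto simp: normal_subobject_poset_carrier\<close>)

lemma lattice_normal_subobject_poset: "lattice (normal_subobject_poset G P)"
proof (intro lattice.intro upper_semilattice.intro lower_semilattice.intro
    upper_semilattice_axioms.intro lower_semilattice_axioms.intro
    partial_order_normal_subobject_poset)
  fix N M assume "N \<in> carrier (normal_subobject_poset G P)" "M \<in> carrier (normal_subobject_poset G P)"
  then obtain A B where "N = (A, A \<inter> P)" "M = (B, B \<inter> P)" "A \<lhd> G" "B \<lhd> G"
    by (auto simp: normal_subobject_poset_carrier)
  then show "\<exists>S. least (normal_subobject_poset G P) S (Upper (normal_subobject_poset G P) {N, M})"
    and "\<exists>I. greatest (normal_subobject_poset G P) I (Lower (normal_subobject_poset G P) {N, M})"
    using normal_subobject_join_least normal_subobject_meet_greatest by blast+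
qed

lemma normal_subobject_join:
  assumes "A \<lhd> G" "B \<lhd> G"
  shows "(A, A \<inter> P) \<squnion>\<^bsub>normal_subobject_poset G P\<^esub> (B, B \<inter> P) = (A <#> B, (A <#> B) \<inter> P)"
proof -
  interpret lattice "normal_subobject_poset G P" by (rule lattice_normal_subobject_poset)
  show ?thesis
  proof (rule joinI)
    fix S assume "least (normal_subobject_poset G P) S
      (Upper (normal_subobject_poset G P) {(A, A \<inter> P), (B, B \<inter> P)})"
    then show "S = (A <#> B, (A <#> B) \<inter> P)"
      using normal_subobject_join_least[OF assms] by (rule least_unique)
  qed (use assms in \<open>auto simp: normal_subobject_poset_carrier\<close>)
qed

lemma normal_subobject_meet:
  assumes "A \<lhd> G" "B \<lhd> G"
  shows "(A, A \<inter> P) \<sqinter>\<^bsub>normal_subobject_poset G P\<^esub> (B, B \<inter> P) = (A \<inter> B, A \<inter> B \<inter> P)"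
proof -
  interpret lattice "normal_subobject_poset G P" by (rule lattice_normal_subobject_poset)
  show ?thesis
  proof (rule meetI)
    fix I assume "greatest (normal_subobject_poset G P) I
      (Lower (normal_subobject_poset G P) {(A, A \<inter> P), (B, B \<inter> P)})"
    then show "I = (A \<inter> B, A \<inter> B \<inter> P)"
      using normal_subobject_meet_greatest[OF assms] by (rule greatest_unique)
  qed (use assms in \<open>auto simp: normal_subobject_poset_carrier\<close>)
qed

lemma normal_subobject_modular:
  assumes "N1 \<in> carrier (normal_subobject_poset G P)" "N2 \<in> carrier (normal_subobject_poset G P)"
    and "N3 \<in> carrier (normal_subobject_poset G P)"
    and "N3 \<sqsubseteq>\<^bsub>normal_subobject_poset G P\<^esub> N1"
  shows "N1 \<sqinter>\<^bsub>normal_subobject_poset G P\<^esub> (N2 \<squnion>\<^bsub>normal_subobject_poset G P\<^esub> N3)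
       = (N1 \<sqinter>\<^bsub>normal_subobject_poset G P\<^esub> N2) \<squnion>\<^bsub>normal_subobject_poset G P\<^esub> N3"
proof -
  obtain A B C where N: "N1 = (A, A \<inter> P)" "N2 = (B, B \<inter> P)" "N3 = (C, C \<inter> P)"
    and normal: "A \<lhd> G" "B \<lhd> G" "C \<lhd> G"
    using assms(1-3) by (auto simp: normal_subobject_poset_carrier)
  have "C \<subseteq> A" using assms(4) N by (simp add: normal_subobject_poset_le_iff)
  then have "A \<inter> (B <#> C) = (A \<inter> B) <#> C"
    using set_mult_modular_law normal_imp_subgroup[OF normal(1)]
      subgroup.subset[OF normal_imp_subgroup[OF normal(2)]] by blast
  moreover have "B <#> C \<lhd> G" "A \<inter> B \<lhd> G"
    using normal normal_subgroup_set_mult_closed normal_subgroup_intersect by auto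
  ultimately show ?thesis
    using normal by (simp add: N normal_subobject_join normal_subobject_meet)
qed

end

theorem proposition2p5:
  fixes G :: "('a, 'b) monoid_scheme" and P :: "'a set"
  assumes "preordered_group G P"
  defines "L \<equiv> normal_subobject_poset G P"
  shows "lattice L \<and>
    (\<forall>N1 \<in> carrier L. \<forall>N2 \<in> carrier L. \<forall>N3 \<in> carrier L.
       N3 \<sqsubseteq>\<^bsub>L\<^esub> N1 \<longrightarrow>
       N1 \<sqinter>\<^bsub>L\<^esub> (N2 \<squnion>\<^bsub>L\<^esub> N3) = (N1 \<sqinter>\<^bsub>L\<^esub> N2) \<squnion>\<^bsub>L\<^esub> N3)"
proof -
  interpret group G using assms(1) by (simp add: preordered_group_def)
  show ?thesis
    unfolding L_def using lattice_normal_subobject_poset normal_subobject_modular by blast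
qed

end
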